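(* For every integer $d\ge 0$ define $\Phi_d:(\mathbb{R}_{\ge 0})^d\to\mathbb{R}[x]$ recursively by \[ \Phi_d(t_0,\ldots,t_{d-1})=\begin{cases}1 & d=0,\\ x+t_0 & d=1,\\ (x-t_{d-2})^2\,\Phi_{d-2}(t_0,\ldots,t_{d-3})+t_{d-1}x & d\ge 2.\end{cases} \] Then for every $d\ge 0$, $\Phi_d$ maps $(\mathbb{R}_{\ge 0})^d$ into $\mathcal{C}_d$, $\Phi_d:(\mathbb{R}_{\ge0})^d\to\mathcal{C}_d$ is surjective, and $\Phi_d$ is generically injective: there is a subset $N\subseteq(\mathbb{R}_{\ge 0})^d$ of Lebesgue measure zero such that the restriction of $\Phi_d$ to $(\mathbb{R}_{\ge0})^d\setminus N$ is injective.
   Context: A polynomial $f\in\mathbb{R}[x]$ is called copositive if $f(x)\ge 0$ for all real $x\ge 0$. $F_d$ denotes the set of monic polynomials in $\mathbb{R}[x]$ of degree exactly $d$, and $\mathcal{C}_d=\{f\in F_d: f \text{ copositive}\}$. For $d=0$, $(\mathbb{R}_{\ge0})^0$ is a single point and $\mathcal{C}_0=\{1\}$. *)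

theory Defs
  imports "HOL-Analysis.Analysis" "HOL-Computational_Algebra.Polynomial"
begin

fun Phi :: "nat \<Rightarrow> (nat \<Rightarrow> real) \<Rightarrow> real poly" where
  "Phi 0 t = 1"
| "Phi (Suc 0) t = [:t 0, 1:]"
| "Phi (Suc (Suc n)) t = [:- t n, 1:] ^ 2 * Phi n t + monom (t (Suc n)) 1"

definition copositive :: "real poly \<Rightarrow> bool" where
  "copositive f \<longleftrightarrow> (\<forall>x::real. x \<ge> 0 \<longrightarrow> poly f x \<ge> 0)"

definition monic_deg :: "nat \<Rightarrow> real poly set" where
  "monic_deg d = {f. degree f = d \<and> lead_coeff f = 1}"

definition Cop :: "nat \<Rightarrow> real poly set" where
  "Cop d = {f \<in> monic_deg d. copositive f}"

definition nonneg_orthant :: "nat \<Rightarrow> (nat \<Rightarrow> real) set" where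
  "nonneg_orthant d = PiE {..<d} (\<lambda>_. {0..})"

end

theory Submission
  imports Defs
begin

text \<open>Write a monic copositive f of degree d + 2 as f = c + x h. Minimising f(x)/x = h(x) + c/x over
  x > 0 (or h over x \<ge> 0 when c = 0) yields the steepest line b x through the origin below f on
  [0, \<infinity>), touching it at some a \<ge> 0. Then f - b x has a double root at a, so
  f = (x - a)^2 g + b x with g monic copositive of degree d, and induction gives surjectivity.
  If all parameters are positive, comparing the values of two such representations at a and at a'
  forces b = b', then a = a' and g = g'; so Phi is injective off the coordinate hyperplanes,
  which are null sets.\<close>

lemma continuous_attains_inf_outside_compact:
  fixes g :: "'a::topological_space \<Rightarrow> 'b::linorder_topology"
  assumes "continuous_on S g" "compact K" "K \<subseteq> S" "x0 \<in> K"
    and "\<forall>y\<in>S - K. g x0 \<le> g y"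
  obtains a where "a \<in> K" "\<forall>y\<in>S. g a \<le> g y"
proof -
  obtain a where a: "a \<in> K" "\<forall>y\<in>K. g a \<le> g y"
    using continuous_attains_inf[OF assms(2) _ continuous_on_subset[OF assms(1,3)]] assms(4)
    by blast
  have "g a \<le> g y" if "y \<in> S" for y
    using a assms(4,5) that by (cases "y \<in> K") (auto intro: order.trans)
  with a show thesis
    using that by blast
qed

lemma continuous_attains_inf_atLeast:
  fixes g :: "real \<Rightarrow> real"
  assumes "continuous_on {l..} g" "filterlim g at_top at_top"
  obtains a where "l \<le> a" "\<forall>y\<ge>l. g a \<le> g y"
proof -
  obtain R where R: "\<forall>y\<ge>R. g l \<le> g y"
    using assms(2) unfolding filterlim_at_top eventually_at_top_linorder by blast
  have "\<forall>y\<in>{l..} - {l..max l R}. g l \<le> g y"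
    using R by auto
  then obtain a where "a \<in> {l..max l R}" "\<forall>y\<in>{l..}. g a \<le> g y"
    using continuous_attains_inf_outside_compact[OF assms(1) compact_Icc, of l "max l R" l]
    by auto
  then show thesis
    using that by auto
qed

lemma continuous_attains_inf_greaterThan:
  fixes g :: "real \<Rightarrow> real"
  assumes "continuous_on {l<..} g" "filterlim g at_top (at_right l)" "filterlim g at_top at_top"
  obtains a where "l < a" "\<forall>y>l. g a \<le> g y"
proof -
  obtain r where r: "l < r" "\<forall>y>l. y < r \<longrightarrow> g (l + 1) \<le> g y"
    using assms(2) unfolding filterlim_at_top eventually_at_right_field by blast
  obtain R where R: "\<forall>y\<ge>R. g (l + 1) \<le> g y"
    using assms(3) unfolding filterlim_at_top eventually_at_top_linorder by blast
  define r' where "r' = min (l + 1) ((l + r) / 2)"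
  have r': "l < r'" "r' \<le> l + 1" "r' < r"
    using r(1) by (auto simp: r'_def min_def)
  have K: "{r'..max (l + 1) R} \<subseteq> {l<..}" "l + 1 \<in> {r'..max (l + 1) R}"
    using r' by auto
  have "g (l + 1) \<le> g y" if "l < y" "y \<notin> {r'..max (l + 1) R}" for y
  proof (cases "y < r'")
    case True
    then show ?thesis
      using r(2) r'(3) that(1) by simp
  next
    case False
    then show ?thesis
      using R that by simp
  qed
  then obtain a where a: "a \<in> {r'..max (l + 1) R}" "\<forall>y\<in>{l<..}. g a \<le> g y"
    using continuous_attains_inf_outside_compact[OF assms(1) compact_Icc K] by auto
  show thesis
    by (rule that[of a]) (use a r' in auto)
qed

lemma poly_tendsto_at_top:
  fixes p :: "real poly"
  assumes "0 < degree p" "0 < lead_coeff p"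
  shows "filterlim (poly p) at_top at_top"
  unfolding filterlim_at_top eventually_at_top_linorder
proof
  fix M :: real
  have "degree (p + [:- M:]) = degree p"
    using assms(1) by (intro degree_add_eq_left) simp
  then have "lead_coeff (p + [:- M:]) = lead_coeff p"
    using assms(1) by (simp add: coeff_pCons split: nat.split)
  then obtain N where "\<forall>x\<ge>N. lead_coeff p \<le> poly (p + [:- M:]) x"
    using poly_pinfty_gt_lc[of "p + [:- M:]"] assms(2) by auto
  then have "\<forall>x\<ge>N. M \<le> poly p x"
    using assms(2) by (auto intro: order.trans[of _ "M + lead_coeff p"])
  then show "\<exists>N. \<forall>x\<ge>N. M \<le> poly p x" ..
qed

lemma poly_attains_inf_nonneg:
  fixes h :: "real poly"
  assumes "0 < degree h" "0 < lead_coeff h"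
  obtains a where "0 \<le> a" "\<forall>x\<ge>0. poly h a \<le> poly h x" "a * poly (pderiv h) a = 0"
proof -
  obtain a where a: "0 \<le> a" "\<forall>x\<ge>0. poly h a \<le> poly h x"
    using continuous_attains_inf_atLeast[OF _ poly_tendsto_at_top[OF assms]]
      continuous_on_poly[OF continuous_on_id] by blast
  have "poly (pderiv h) a = 0" if "0 < a"
  proof (rule DERIV_local_min[OF poly_DERIV that])
    show "\<forall>y. \<bar>a - y\<bar> < a \<longrightarrow> poly h a \<le> poly h y"
      using a(2) by (auto simp: abs_less_iff)
  qed
  with a show thesis
    using that by fastforce
qed

lemma poly_add_reciprocal_attains_inf:
  fixes h :: "real poly"
  assumes "0 < c" "0 < degree h" "0 < lead_coeff h"
  obtains a where "0 < a" "\<forall>x>0. poly h a + c / a \<le> poly h x + c / x"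
    "poly (pderiv h) a = c / a\<^sup>2"
proof -
  let ?g = "\<lambda>x. poly h x + c / x"
  have "filterlim ?g at_top (at_right 0)"
  proof (rule filterlim_tendsto_add_at_top)
    show "(poly h \<longlongrightarrow> poly h 0) (at_right 0)"
      by (intro tendsto_intros)
    show "filterlim (\<lambda>x. c / x) at_top (at_right 0)"
      unfolding divide_inverse
      by (rule filterlim_tendsto_pos_mult_at_top[OF tendsto_const assms(1) filterlim_inverse_at_top_right])
  qed
  moreover have "filterlim ?g at_top at_top"
    by (subst add.commute, rule filterlim_tendsto_add_at_top[OF tendsto_divide_0 poly_tendsto_at_top])
      (use assms in \<open>auto intro: filterlim_at_top_imp_at_infinity filterlim_ident\<close>)
  moreover have "continuous_on {0<..} ?g"
    by (intro continuous_intros) auto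
  ultimately obtain a where a: "0 < a" "\<forall>x>0. ?g a \<le> ?g x"
    using continuous_attains_inf_greaterThan by blast
  have "DERIV ?g a :> poly (pderiv h) a - c / a\<^sup>2"
    using a(1) by (auto intro!: derivative_eq_intros simp: power2_eq_square field_simps)
  moreover have "\<forall>y. \<bar>a - y\<bar> < a \<longrightarrow> ?g a \<le> ?g y"
    using a(2) by (auto simp: abs_less_iff)
  ultimately have "poly (pderiv h) a - c / a\<^sup>2 = 0"
    using DERIV_local_min a(1) by blast
  with a show thesis
    using that by simp
qed

lemma poly_nonneg_at_right_limit:
  fixes p :: "real poly"
  assumes "\<forall>x>a. 0 \<le> poly p x"
  shows "0 \<le> poly p a"
proof (rule tendsto_lowerbound)
  show "(poly p \<longlongrightarrow> poly p a) (at_right a)"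
    by (intro tendsto_intros)
  show "\<forall>\<^sub>F x in at_right a. 0 \<le> poly p x"
    using eventually_at_right_less by (rule eventually_mono) (use assms in auto)
qed simp

lemma square_dvd_if_root_of_pderiv:
  fixes p :: "'a::idom poly"
  assumes "poly p a = 0" "poly (pderiv p) a = 0"
  shows "[:- a, 1:]\<^sup>2 dvd p"
proof -
  obtain q where q: "p = [:- a, 1:] * q"
    using assms(1) by (metis dvdE poly_eq_0_iff_dvd)
  have "pderiv p = [:- a, 1:] * pderiv q + q"
    unfolding q pderiv_mult by (simp add: pderiv_pCons)
  then have "poly q a = 0"
    using assms(2) by simp
  then obtain r where "q = [:- a, 1:] * r"
    by (metis dvdE poly_eq_0_iff_dvd)
  then have "p = [:- a, 1:]\<^sup>2 * r"
    using q by (simp only: power2_eq_square mult.assoc)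
  then show ?thesis
    by (rule dvdI)
qed

lemma degree_square_mult_add_monom:
  fixes g :: "'a::idom poly"
  assumes "g \<noteq> 0"
  shows "degree ([:- a, 1:]\<^sup>2 * g + monom b 1) = degree g + 2"
proof -
  have "degree ([:- a, 1:]\<^sup>2 * g) = degree g + 2"
    using assms by (simp add: degree_mult_eq degree_power_eq)
  moreover have "degree (monom b 1 :: 'a poly) < degree g + 2"
    using degree_monom_le[of b 1] by linarith
  ultimately show ?thesis
    by (simp add: degree_add_eq_left)
qed

lemma lead_coeff_square_mult_add_monom:
  fixes g :: "'a::idom poly"
  assumes "g \<noteq> 0"
  shows "lead_coeff ([:- a, 1:]\<^sup>2 * g + monom b 1) = lead_coeff g"
proof -
  have "degree ([:- a, 1:]\<^sup>2 * g) = degree g + 2"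
    using assms by (simp add: degree_mult_eq degree_power_eq)
  moreover have "lead_coeff ([:- a, 1:]\<^sup>2 * g) = lead_coeff g"
    by (simp add: lead_coeff_mult lead_coeff_power)
  ultimately show ?thesis
    unfolding degree_square_mult_add_monom[OF assms] by (simp add: coeff_monom)
qed

definition supporting_ray :: "real poly \<Rightarrow> real \<Rightarrow> real \<Rightarrow> bool" where
  "supporting_ray f a b \<longleftrightarrow> 0 \<le> a \<and> 0 \<le> b \<and> (\<forall>x\<ge>0. b * x \<le> poly f x)
    \<and> poly f a = b * a \<and> poly (pderiv f) a = b"

lemma supporting_ray_pCons_0:
  fixes h :: "real poly"
  assumes "copositive (pCons 0 h)" "0 < degree h" "0 < lead_coeff h"
  shows "\<exists>a b. supporting_ray (pCons 0 h) a b"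
proof -
  obtain a where a: "0 \<le> a" "\<forall>x\<ge>0. poly h a \<le> poly h x" "a * poly (pderiv h) a = 0"
    using poly_attains_inf_nonneg[OF assms(2,3)] .
  have "0 \<le> poly h x" if "a < x" for x
  proof -
    have "0 \<le> x * poly h x"
      using assms(1) a(1) that by (simp add: copositive_def)
    with a(1) that show ?thesis
      by (simp add: zero_le_mult_iff)
  qed
  then have "0 \<le> poly h a"
    by (intro poly_nonneg_at_right_limit) auto
  moreover have "\<forall>x\<ge>0. poly h a * x \<le> poly (pCons 0 h) x"
    using a(2) by (auto simp: mult.commute intro: mult_left_mono)
  ultimately have "supporting_ray (pCons 0 h) a (poly h a)"
    using a by (simp add: supporting_ray_def pderiv_pCons mult.commute)
  then show ?thesis
    by blast
qed

lemma supporting_ray_pCons_pos: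
  fixes h :: "real poly"
  assumes "copositive (pCons c h)" "0 < c" "0 < degree h" "0 < lead_coeff h"
  shows "\<exists>a b. supporting_ray (pCons c h) a b"
proof -
  obtain a where a: "0 < a" "\<forall>x>0. poly h a + c / a \<le> poly h x + c / x"
    "poly (pderiv h) a = c / a\<^sup>2"
    using poly_add_reciprocal_attains_inf[OF assms(2-4)] .
  define b where "b = poly h a + c / a"
  have fa: "poly (pCons c h) a = b * a"
    using a(1) by (simp add: b_def field_simps)
  have "b * x \<le> poly (pCons c h) x" if "0 \<le> x" for x
  proof (cases "x = 0")
    case False
    then have "b * x \<le> (poly h x + c / x) * x"
      using a(2) that by (simp add: b_def mult_right_mono)
    also have "\<dots> = poly (pCons c h) x"
      using False by (simp add: field_simps)
    finally show ?thesis .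
  qed (use assms(2) in simp)
  moreover have "0 \<le> b"
  proof -
    have "0 \<le> b * a"
      using assms(1) a(1) fa unfolding copositive_def by (metis less_imp_le)
    with a(1) show ?thesis
      by (simp add: zero_le_mult_iff)
  qed
  moreover have "poly (pderiv (pCons c h)) a = b"
    using a by (simp add: pderiv_pCons b_def power2_eq_square field_simps)
  ultimately have "supporting_ray (pCons c h) a b"
    using a(1) fa by (simp add: supporting_ray_def)
  then show ?thesis
    by blast
qed

lemma copositive_supporting_ray:
  fixes f :: "real poly"
  assumes "copositive f" "2 \<le> degree f" "0 < lead_coeff f"
  shows "\<exists>a b. supporting_ray f a b"
proof -
  obtain c h where f: "f = pCons c h"
    by (cases f)
  have "h \<noteq> 0"
    using assms(2) by (auto simp: f)
  then have h: "0 < degree h" "0 < lead_coeff h"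
    using assms(2,3) by (simp_all add: f)
  have "0 \<le> poly f 0"
    using assms(1) by (simp add: copositive_def)
  then consider "c = 0" | "0 < c"
    by (force simp: f)
  then show ?thesis
    using supporting_ray_pCons_0 supporting_ray_pCons_pos assms(1) h unfolding f by cases auto
qed

lemma copositive_decompose:
  assumes "f \<in> Cop (n + 2)"
  obtains a b g where "0 \<le> a" "0 \<le> b" "g \<in> Cop n" "f = [:- a, 1:]\<^sup>2 * g + monom b 1"
proof -
  have f: "copositive f" "degree f = n + 2" "lead_coeff f = 1"
    using assms by (auto simp: Cop_def monic_deg_def)
  obtain a b where ab: "0 \<le> a" "0 \<le> b" "\<forall>x\<ge>0. b * x \<le> poly f x"
    "poly f a = b * a" "poly (pderiv f) a = b"
    using copositive_supporting_ray[of f] f unfolding supporting_ray_def by auto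
  have "[:- a, 1:]\<^sup>2 dvd f - monom b 1"
    using ab by (intro square_dvd_if_root_of_pderiv) (simp_all add: poly_monom pderiv_diff pderiv_monom)
  then obtain g where "f - monom b 1 = [:- a, 1:]\<^sup>2 * g"
    by (elim dvdE)
  then have f_eq: "f = [:- a, 1:]\<^sup>2 * g + monom b 1"
    by (simp add: algebra_simps)
  have "g \<noteq> 0"
    using f(2) f_eq degree_monom_le[of b 1] by auto
  then have "degree g = n" "lead_coeff g = 1"
    using f f_eq degree_square_mult_add_monom[of g a b] lead_coeff_square_mult_add_monom[of g a b]
    by simp_all
  have g_nonneg: "0 \<le> poly g x" if "0 \<le> x" "x \<noteq> a" for x
  proof -
    have "0 \<le> (x - a)\<^sup>2 * poly g x"
      using ab(3) that(1) by (simp add: f_eq poly_monom)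
    moreover have "0 < (x - a)\<^sup>2"
      using that(2) by simp
    ultimately show ?thesis
      by (simp add: zero_le_mult_iff)
  qed
  have "copositive g"
    unfolding copositive_def
  proof (intro allI impI)
    fix x :: real
    assume "0 \<le> x"
    show "0 \<le> poly g x"
    proof (cases "x = a")
      case True
      show ?thesis
        unfolding True by (rule poly_nonneg_at_right_limit) (use ab(1) g_nonneg in auto)
    qed (use g_nonneg \<open>0 \<le> x\<close> in auto)
  qed
  with \<open>degree g = n\<close> \<open>lead_coeff g = 1\<close> have "g \<in> Cop n"
    by (simp add: Cop_def monic_deg_def)
  with ab(1,2) f_eq show thesis
    using that by blast
qed

lemma Phi_cong: "(\<And>i. i < n \<Longrightarrow> t i = s i) \<Longrightarrow> Phi n t = Phi n s"
  by (induction n t rule: Phi.induct) auto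

lemma poly_Phi_Suc_Suc:
  "poly (Phi (Suc (Suc n)) t) x = (x - t n)\<^sup>2 * poly (Phi n t) x + t (Suc n) * x"
  by (simp add: poly_monom)

lemma Phi_in_monic_deg: "Phi n t \<in> monic_deg n"
proof (induction n t rule: Phi.induct)
  case (3 n t)
  then have "Phi n t \<noteq> 0"
    by (auto simp: monic_deg_def)
  with 3 show ?case
    using degree_square_mult_add_monom[of "Phi n t" "t n" "t (Suc n)"]
      lead_coeff_square_mult_add_monom[of "Phi n t" "t n" "t (Suc n)"]
    by (auto simp: monic_deg_def)
qed (auto simp: monic_deg_def)

lemma Phi_nonneg: "(\<And>i. i < n \<Longrightarrow> 0 \<le> t i) \<Longrightarrow> 0 \<le> x \<Longrightarrow> 0 \<le> poly (Phi n t) x"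
  by (induction n t rule: Phi.induct) (simp_all add: poly_Phi_Suc_Suc del: Phi.simps(3))

lemma Phi_pos: "(\<And>i. i < n \<Longrightarrow> 0 < t i) \<Longrightarrow> 0 < x \<Longrightarrow> 0 < poly (Phi n t) x"
  by (induction n t rule: Phi.induct)
    (simp_all add: poly_Phi_Suc_Suc add_nonneg_pos del: Phi.simps(3))

lemma Phi_in_Cop: "(\<And>i. i < n \<Longrightarrow> 0 \<le> t i) \<Longrightarrow> Phi n t \<in> Cop n"
  using Phi_in_monic_deg Phi_nonneg by (simp add: Cop_def copositive_def)

lemma Cop_1_eq: "f \<in> Cop 1 \<Longrightarrow> f = [:poly f 0, 1:] \<and> 0 \<le> poly f 0"
proof -
  assume f: "f \<in> Cop 1"
  have "f = [:coeff f 0, 1:]"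
  proof (rule poly_eqI)
    fix k
    show "coeff f k = coeff [:coeff f 0, 1:] k"
      using f by (cases k) (auto simp: Cop_def monic_deg_def coeff_eq_0 coeff_pCons split: nat.split)
  qed
  moreover have "0 \<le> poly f 0"
    using f by (simp add: Cop_def copositive_def)
  ultimately show ?thesis
    by (simp add: poly_0_coeff_0)
qed

lemma Phi_surj: "f \<in> Cop d \<Longrightarrow> \<exists>t\<in>nonneg_orthant d. Phi d t = f"
proof (induction d arbitrary: f rule: nat_induct2)
  case 0
  then have "degree f = 0" "coeff f 0 = 1"
    by (auto simp: Cop_def monic_deg_def)
  then have "f = 1"
    by (metis degree_0_id one_pCons)
  then show ?case
    by (simp add: nonneg_orthant_def)
next
  case 1
  define t where "t = (\<lambda>_::nat. undefined)(0 := poly f 0)"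
  have "Phi 1 t = f"
    using Cop_1_eq[OF 1] by (simp add: t_def One_nat_def)
  moreover have "t \<in> nonneg_orthant 1"
    using Cop_1_eq[OF 1] by (simp add: t_def nonneg_orthant_def PiE_iff extensional_def)
  ultimately show ?case
    by blast
next
  case (step n)
  obtain a b g where abg: "0 \<le> a" "0 \<le> b" "g \<in> Cop n" "f = [:- a, 1:]\<^sup>2 * g + monom b 1"
    using copositive_decompose[OF step.prems] .
  obtain s where s: "s \<in> nonneg_orthant n" "Phi n s = g"
    using step.IH[OF abg(3)] by blast
  define t where "t = s(n := a, Suc n := b)"
  have "Phi n t = Phi n s"
    by (rule Phi_cong) (simp add: t_def)
  then have "Phi (Suc (Suc n)) t = f"
    using abg(4) s(2) by (simp add: t_def)
  moreover have "t \<in> nonneg_orthant (Suc (Suc n))"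
    using s(1) abg(1,2) by (auto simp: t_def nonneg_orthant_def PiE_iff extensional_def less_Suc_eq)
  ultimately show ?case
    by (metis add_2_eq_Suc')
qed

lemma square_mult_add_monom_inject:
  fixes g g' :: "real poly"
  assumes eq: "[:- a, 1:]\<^sup>2 * g + monom b 1 = [:- a', 1:]\<^sup>2 * g' + monom b' 1"
    and "0 < a" "0 < a'" "\<forall>x>0. 0 < poly g x" "\<forall>x>0. 0 < poly g' x"
  shows "a = a' \<and> b = b' \<and> g = g'"
proof -
  have ev: "(x - a)\<^sup>2 * poly g x + b * x = (x - a')\<^sup>2 * poly g' x + b' * x" for x
    using arg_cong[OF eq, of "\<lambda>p. poly p x"] by (simp add: poly_monom)
  have "0 \<le> (a - a')\<^sup>2 * poly g' a"
    using assms(2,5) by (simp add: less_imp_le)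
  then have ba: "b' * a \<le> b * a"
    using ev[of a] by simp
  have "0 \<le> (a' - a)\<^sup>2 * poly g a'"
    using assms(3,4) by (simp add: less_imp_le)
  then have "b * a' \<le> b' * a'"
    using ev[of a'] by simp
  with ba have b: "b = b'"
    using assms(2,3) by (meson antisym mult_right_le_imp_le)
  then have "(a - a')\<^sup>2 * poly g' a = 0"
    using ev[of a] by simp
  moreover have "0 < poly g' a"
    using assms(2,5) by blast
  ultimately have a: "a = a'"
    by simp
  then have "[:- a, 1:]\<^sup>2 * g = [:- a, 1:]\<^sup>2 * g'"
    using eq b by simp
  then show ?thesis
    using a b by simp
qed

lemma Phi_eq_positive_imp_eq:
  "(\<And>i. i < n \<Longrightarrow> 0 < t i) \<Longrightarrow> (\<And>i. i < n \<Longrightarrow> 0 < s i) \<Longrightarrow> Phi n t = Phi n s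
    \<Longrightarrow> i < n \<Longrightarrow> t i = s i"
proof (induction n t arbitrary: s i rule: Phi.induct)
  case (3 n t)
  have "t n = s n \<and> t (Suc n) = s (Suc n) \<and> Phi n t = Phi n s"
    using 3(2-4) Phi_pos[of n t] Phi_pos[of n s]
    by (intro square_mult_add_monom_inject) auto
  then show ?case
    using 3(1)[of s i] 3(2-5) by (auto simp: less_Suc_eq)
qed auto

definition coordinate_hyperplane :: "nat \<Rightarrow> nat \<Rightarrow> (nat \<Rightarrow> real) set" where
  "coordinate_hyperplane d i = PiE {..<d} (\<lambda>j. if j = i then {0} else UNIV)"

lemma coordinate_hyperplane_null:
  assumes "i < d"
  shows "coordinate_hyperplane d i \<in> null_sets (PiM {..<d} (\<lambda>_. lborel))"
proof -
  interpret product_sigma_finite "\<lambda>_::nat. lborel :: real measure"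
    by (simp add: product_sigma_finite_def lborel.sigma_finite_measure_axioms)
  have "emeasure (PiM {..<d} (\<lambda>_. lborel)) (coordinate_hyperplane d i)
      = (\<Prod>j<d. emeasure lborel (if j = i then {0::real} else UNIV))"
    unfolding coordinate_hyperplane_def by (rule emeasure_PiM) auto
  also have "\<dots> = 0"
    using assms by (intro prod_zero) auto
  finally show ?thesis
    unfolding coordinate_hyperplane_def null_sets_def by (auto intro: sets_PiM_I_finite)
qed

lemma positive_off_coordinate_hyperplanes:
  assumes "t \<in> nonneg_orthant d - (\<Union>i<d. coordinate_hyperplane d i)" "i < d"
  shows "0 < t i"
proof -
  have t: "t \<in> PiE {..<d} (\<lambda>_. {0..})" "t \<notin> coordinate_hyperplane d i"
    using assms by (auto simp: nonneg_orthant_def)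
  have "t i \<noteq> 0"
  proof
    assume "t i = 0"
    with t(1) have "t \<in> coordinate_hyperplane d i"
      by (auto simp: coordinate_hyperplane_def PiE_iff)
    with t(2) show False ..
  qed
  moreover have "0 \<le> t i"
    using t(1) assms(2) by (auto simp: PiE_iff)
  ultimately show ?thesis
    by simp
qed

lemma inj_on_Phi_off_coordinate_hyperplanes:
  "inj_on (Phi d) (nonneg_orthant d - (\<Union>i<d. coordinate_hyperplane d i))"
proof (rule inj_onI)
  fix t s
  assume t: "t \<in> nonneg_orthant d - (\<Union>i<d. coordinate_hyperplane d i)"
    and s: "s \<in> nonneg_orthant d - (\<Union>i<d. coordinate_hyperplane d i)"
    and eq: "Phi d t = Phi d s"
  have "t i = s i" if "i < d" for i
    using Phi_eq_positive_imp_eq[of d t s i] positive_off_coordinate_hyperplanes[OF t]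
      positive_off_coordinate_hyperplanes[OF s] eq that by blast
  moreover have "t \<in> extensional {..<d}" "s \<in> extensional {..<d}"
    using t s by (auto simp: nonneg_orthant_def PiE_def)
  ultimately show "t = s"
    by (intro extensionalityI) auto
qed

theorem theorem1:
  fixes d :: nat
  shows "Phi d ` nonneg_orthant d \<subseteq> Cop d
    \<and> Phi d ` nonneg_orthant d = Cop d
    \<and> (\<exists>N. N \<in> null_sets (PiM {..<d} (\<lambda>_. lborel))
          \<and> inj_on (Phi d) (nonneg_orthant d - N))"
proof -
  have "Phi d ` nonneg_orthant d \<subseteq> Cop d"
    by (auto simp: nonneg_orthant_def intro!: Phi_in_Cop)
  moreover have "Cop d \<subseteq> Phi d ` nonneg_orthant d"
    using Phi_surj by blast
  moreover have "(\<Union>i<d. coordinate_hyperplane d i) \<in> null_sets (PiM {..<d} (\<lambda>_. lborel))"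
    by (auto intro!: null_sets_UN' coordinate_hyperplane_null)
  ultimately show ?thesis
    using inj_on_Phi_off_coordinate_hyperplanes by blast
qed

end
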